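(* Let $s=0$, $\lambda\in\mathbb{C}$ and $k\in\mathbb{Z}\setminus\{0\}$. Every even superderivation of $\mathfrak{L}^0_\lambda$ of degree $k$ is inner; more precisely, it equals $\mathrm{ad}(aL_k+bI_k)$ for some $a,b\in\mathbb{C}$.
   Context: For $s\in\{0,\tfrac12\}$ and $\lambda\in\mathbb{C}$, $\mathfrak{L}^s_\lambda$ is the complex Lie superalgebra with basis $\{L_m,I_m,G_p,H_p : m\in\mathbb{Z},\ p\in s+\mathbb{Z}\}$, even part spanned by the $L_m,I_m$, odd part spanned by the $G_p,H_p$, and brackets $[L_m,L_n]=(m-n)L_{m+n}$, $[L_m,I_n]=(m-n)I_{m+n}$, $[L_m,H_p]=(\tfrac m2-p)H_{m+p}$, $[L_m,G_p]=(\tfrac m2-p)G_{m+p}+\lambda(m+1)H_{m+p}$, $[I_m,G_p]=(m-2p)H_{m+p}$, $[G_p,G_q]=I_{p+q}$, plus those given by super-antisymmetry $[y,x]=-(-1)^{|x||y|}[x,y]$; all other brackets of basis elements are zero. The algebra is graded by $\tfrac12\mathbb{Z}$: $\mathfrak{L}_r$ is spanned by the basis elements with index $r$. A superderivation of parity $a$ is a linear map $D$ shifting parity by $a$ with $D([x,y])=[D(x),y]+(-1)^{a|x|}[x,D(y)]$ for homogeneous $x,y$; it has degree $r$ if $D(\mathfrak{L}_q)\subset\mathfrak{L}_{q+r}$ for all $q$. $\mathrm{ad}\,x(y)=[x,y]$. *)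

theory Defs
  imports Complex_Main
begin

text \<open>Basis of the Lie superalgebra L^0_lambda (s = 0, so odd indices p are integers).\<close>
datatype basis = L int | I int | G int | H int

text \<open>Elements are finitely supported coefficient functions on the basis.\<close>
type_synonym elem = "basis \<Rightarrow> complex"

definition supp :: "elem \<Rightarrow> basis set" where
  "supp x = {b. x b \<noteq> 0}"

definition Alg :: "elem set" where
  "Alg = {x. finite (supp x)}"

definition unit_vec :: "basis \<Rightarrow> elem" where
  "unit_vec b = (\<lambda>c. if c = b then 1 else 0)"

fun idx :: "basis \<Rightarrow> int" where
  "idx (L m) = m" | "idx (I m) = m" | "idx (G p) = p" | "idx (H p) = p"

fun is_odd_b :: "basis \<Rightarrow> bool" where
  "is_odd_b (L _) = False" | "is_odd_b (I _) = False"
| "is_odd_b (G _) = True" | "is_odd_b (H _) = True"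

text \<open>Brackets of basis elements (including those obtained by super-antisymmetry).\<close>
fun bb :: "complex \<Rightarrow> basis \<Rightarrow> basis \<Rightarrow> elem" where
  "bb lam (L m) (L n) = (\<lambda>c. of_int (m - n) * unit_vec (L (m + n)) c)"
| "bb lam (L m) (I n) = (\<lambda>c. of_int (m - n) * unit_vec (I (m + n)) c)"
| "bb lam (I n) (L m) = (\<lambda>c. - of_int (m - n) * unit_vec (I (m + n)) c)"
| "bb lam (L m) (H p) = (\<lambda>c. (of_int m / 2 - of_int p) * unit_vec (H (m + p)) c)"
| "bb lam (H p) (L m) = (\<lambda>c. - (of_int m / 2 - of_int p) * unit_vec (H (m + p)) c)"
| "bb lam (L m) (G p) = (\<lambda>c. (of_int m / 2 - of_int p) * unit_vec (G (m + p)) c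
                          + lam * of_int (m + 1) * unit_vec (H (m + p)) c)"
| "bb lam (G p) (L m) = (\<lambda>c. - ((of_int m / 2 - of_int p) * unit_vec (G (m + p)) c
                          + lam * of_int (m + 1) * unit_vec (H (m + p)) c))"
| "bb lam (I m) (G p) = (\<lambda>c. of_int (m - 2 * p) * unit_vec (H (m + p)) c)"
| "bb lam (G p) (I m) = (\<lambda>c. - of_int (m - 2 * p) * unit_vec (H (m + p)) c)"
| "bb lam (G p) (G q) = unit_vec (I (p + q))"
| "bb lam _ _ = (\<lambda>c. 0)"

definition br :: "complex \<Rightarrow> elem \<Rightarrow> elem \<Rightarrow> elem" where
  "br lam x y = (\<lambda>c. \<Sum>a\<in>supp x. \<Sum>b\<in>supp y. x a * y b * bb lam a b c)"

definition homog :: "bool \<Rightarrow> elem \<Rightarrow> bool" where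
  "homog par x \<longleftrightarrow> x \<in> Alg \<and> (\<forall>b\<in>supp x. is_odd_b b = par)"

definition graded :: "int \<Rightarrow> elem set" where
  "graded q = {x \<in> Alg. \<forall>b\<in>supp x. idx b = q}"

definition linear_on_Alg :: "(elem \<Rightarrow> elem) \<Rightarrow> bool" where
  "linear_on_Alg D \<longleftrightarrow> (\<forall>x\<in>Alg. D x \<in> Alg)
     \<and> (\<forall>x\<in>Alg. \<forall>y\<in>Alg. D (\<lambda>b. x b + y b) = (\<lambda>b. D x b + D y b))
     \<and> (\<forall>c. \<forall>x\<in>Alg. D (\<lambda>b. c * x b) = (\<lambda>b. c * D x b))"

definition superderivation :: "complex \<Rightarrow> bool \<Rightarrow> (elem \<Rightarrow> elem) \<Rightarrow> bool" where
  "superderivation lam par D \<longleftrightarrow> linear_on_Alg D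
     \<and> (\<forall>px x. homog px x \<longrightarrow> homog (px \<noteq> par) (D x))
     \<and> (\<forall>px py x y. homog px x \<longrightarrow> homog py y \<longrightarrow>
          D (br lam x y) = (\<lambda>c. br lam (D x) y c + (if par \<and> px then -1 else 1) * br lam x (D y) c))"

definition has_degree :: "int \<Rightarrow> (elem \<Rightarrow> elem) \<Rightarrow> bool" where
  "has_degree r D \<longleftrightarrow> (\<forall>q. \<forall>x\<in>graded q. D x \<in> graded (q + r))"

end

theory Submission
  imports Defs
begin

text \<open>On elements of degree \<open>q\<close>, \<open>ad L\<^sub>0\<close> acts as \<open>-q + \<lambda> N\<close>, where the nilpotent map
  \<open>N = G_to_H\<close> sends \<open>G\<^sub>p\<close> to \<open>H\<^sub>p\<close> and kills the other basis vectors. Applying \<open>D\<close> to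
  \<open>[L\<^sub>0, y]\<close> and using that \<open>D\<close> raises degrees by \<open>k\<close> shows that, for \<open>X = D(L\<^sub>0)/k\<close>
  (which lies in the span of \<open>L\<^sub>k, I\<^sub>k\<close>), the map \<open>E = D - ad X\<close> satisfies
  \<open>k E(y) = \<lambda> (N E(y) - E(N y))\<close>, because \<open>ad X\<close> commutes with \<open>N\<close>. For \<open>y\<close> not of
  type \<open>G\<close> we have \<open>N y = 0\<close>, and \<open>k w = \<lambda> N w\<close> with \<open>k \<noteq> 0\<close> forces \<open>w = 0\<close>; the case
  \<open>y = G\<^sub>p\<close> then follows since \<open>N G\<^sub>p = H\<^sub>p\<close>. Hence \<open>D = ad X\<close>.\<close>

lemma supp_unit_vec [simp]: "supp (unit_vec b) = {b}"
  by (auto simp: supp_def unit_vec_def)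

lemma unit_vec_in_Alg [simp]: "unit_vec b \<in> Alg"
  by (simp add: Alg_def)

lemma lin_comb_in_Alg: "finite F \<Longrightarrow> (\<lambda>c. \<Sum>y\<in>F. f y * unit_vec y c) \<in> Alg"
proof -
  assume F: "finite F"
  have "supp (\<lambda>c. \<Sum>y\<in>F. f y * unit_vec y c) \<subseteq> F"
  proof
    fix c assume "c \<in> supp (\<lambda>c. \<Sum>y\<in>F. f y * unit_vec y c)"
    then have "(\<Sum>y\<in>F. f y * unit_vec y c) \<noteq> 0" by (simp add: supp_def)
    then obtain y where "y \<in> F" "f y * unit_vec y c \<noteq> 0" by (meson sum.neutral)
    then show "c \<in> F" by (auto simp: unit_vec_def split: if_splits)
  qed
  then show ?thesis
    using F finite_subset unfolding Alg_def by blast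
qed

lemma Alg_unit_vec_expansion: "x \<in> Alg \<Longrightarrow> x = (\<lambda>c. \<Sum>y\<in>supp x. x y * unit_vec y c)"
proof (rule ext)
  fix c assume "x \<in> Alg"
  then have "finite (supp x)" by (simp add: Alg_def)
  then show "x c = (\<Sum>y\<in>supp x. x y * unit_vec y c)"
    by (simp add: unit_vec_def sum.delta' supp_def if_distrib cong: if_cong)
qed

lemma scale_in_Alg: "x \<in> Alg \<Longrightarrow> (\<lambda>c. a * x c) \<in> Alg"
  unfolding Alg_def by (auto simp: supp_def elim: rev_finite_subset)

lemma zero_in_Alg [simp]: "(\<lambda>c. 0) \<in> Alg"
  by (simp add: Alg_def supp_def)

lemma br_zero_right [simp]: "br lam u (\<lambda>c. 0) = (\<lambda>c. 0)"
  by (simp add: br_def supp_def)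

lemma br_unit_vec_right:
  assumes "finite S" "supp u \<subseteq> S"
  shows "br lam u (unit_vec b) c = (\<Sum>a\<in>S. u a * bb lam a b c)"
proof -
  have "br lam u (unit_vec b) c = (\<Sum>a\<in>supp u. u a * bb lam a b c)"
    unfolding br_def supp_unit_vec by (simp add: unit_vec_def)
  also have "\<dots> = (\<Sum>a\<in>S. u a * bb lam a b c)"
    by (rule sum.mono_neutral_left) (use assms in \<open>auto simp: supp_def\<close>)
  finally show ?thesis .
qed

lemma br_unit_vecs: "br lam (unit_vec a) (unit_vec b) = bb lam a b"
  by (rule ext) (simp add: br_unit_vec_right[of "{a}"], simp add: unit_vec_def)

lemma br_expand_right:
  "x \<in> Alg \<Longrightarrow> br lam u x c = (\<Sum>b\<in>supp x. x b * br lam u (unit_vec b) c)"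
  unfolding br_def supp_unit_vec
  by (simp add: unit_vec_def sum_distrib_left mult_ac sum.swap[of _ "supp u"])

definition G_to_H :: "elem \<Rightarrow> elem" where
  "G_to_H w = (\<lambda>c. case c of H p \<Rightarrow> w (G p) | _ \<Rightarrow> 0)"

lemma G_to_H_unit_vec: "G_to_H (unit_vec b) = (case b of G p \<Rightarrow> unit_vec (H p) | _ \<Rightarrow> (\<lambda>c. 0))"
  by (rule ext) (auto simp: G_to_H_def unit_vec_def split: basis.split)

lemma G_to_H_unit_vec_in_Alg: "G_to_H (unit_vec b) \<in> Alg"
  by (cases b) (simp_all add: G_to_H_unit_vec)

lemma bb_L0_left:
  "bb lam (L 0) b = (\<lambda>c. - of_int (idx b) * unit_vec b c + lam * G_to_H (unit_vec b) c)"
  by (rule ext) (cases b; auto simp: G_to_H_def unit_vec_def split: basis.split)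

lemma G_to_H_eq: "G_to_H w c = (if c = H (idx c) then w (G (idx c)) else 0)"
  by (cases c) (simp_all add: G_to_H_def)

lemma br_L0_left:
  assumes "x \<in> Alg"
  shows "br lam (unit_vec (L 0)) x c = - of_int (idx c) * x c + lam * G_to_H x c"
proof -
  have "br lam (unit_vec (L 0)) x c = (\<Sum>b\<in>supp x. x b * bb lam (L 0) b c)"
    by (simp add: br_expand_right[OF assms] br_unit_vecs)
  also have "\<dots> = (\<Sum>b\<in>supp x. (if b = c then - of_int (idx c) * x c else 0)
                     + lam * (if b = G (idx c) \<and> c = H (idx c) then x b else 0))"
  proof (rule sum.cong[OF refl])
    fix b show "x b * bb lam (L 0) b c = (if b = c then - of_int (idx c) * x c else 0)
                     + lam * (if b = G (idx c) \<and> c = H (idx c) then x b else 0)"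
      by (cases b; cases c) (auto simp: unit_vec_def)
  qed
  also have "\<dots> = - of_int (idx c) * x c + lam * G_to_H x c"
    using assms
    by (simp add: sum.distrib sum_distrib_left[symmetric] sum.delta' G_to_H_eq Alg_def supp_def)
  finally show ?thesis .
qed

lemma G_to_H_br_commute:
  assumes "supp u \<subseteq> {L m, I m}"
  shows "G_to_H (br lam u (unit_vec y)) = br lam u (G_to_H (unit_vec y))"
proof (rule ext)
  fix c
  have br_u: "br lam u (unit_vec b) c' = u (L m) * bb lam (L m) b c' + u (I m) * bb lam (I m) b c'"
    for b c' using assms by (simp add: br_unit_vec_right[of "{L m, I m}"])
  have G_to_H_right: "br lam u (G_to_H (unit_vec y)) c
      = (case y of G p \<Rightarrow> br lam u (unit_vec (H p)) c | _ \<Rightarrow> 0)"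
    by (cases y) (simp_all add: G_to_H_unit_vec)
  show "G_to_H (br lam u (unit_vec y)) c = br lam u (G_to_H (unit_vec y)) c"
    unfolding G_to_H_right
    by (cases y; cases c) (simp_all add: G_to_H_def br_u, simp_all add: unit_vec_def)
qed

lemma G_to_H_eigenvector_zero:
  fixes k :: int
  assumes "k \<noteq> 0" and eigen: "\<And>c. of_int k * w c = lam * G_to_H w c"
  shows "w = (\<lambda>c. 0)"
proof -
  have not_H: "w c = 0" if "\<And>p. c \<noteq> H p" for c
    using eigen[of c] that assms(1) by (cases c) (auto simp: G_to_H_def)
  show ?thesis
  proof (rule ext)
    fix c show "w c = 0"
    proof (cases c)
      case (H p)
      moreover have "w (G p) = 0" by (rule not_H) simp
      ultimately show ?thesis using eigen[of c] assms(1) by (simp add: G_to_H_def)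
    qed (use not_H in simp_all)
  qed
qed

context
  fixes lam :: complex and k :: int and D :: "elem \<Rightarrow> elem"
  assumes superder: "superderivation lam False D" and degree: "has_degree k D"
begin

lemma D_linear: "linear_on_Alg D"
  using superder by (simp add: superderivation_def)

lemma D_in_Alg: "x \<in> Alg \<Longrightarrow> D x \<in> Alg"
  using D_linear by (simp add: linear_on_Alg_def)

lemma D_add: "x \<in> Alg \<Longrightarrow> y \<in> Alg \<Longrightarrow> D (\<lambda>c. x c + y c) = (\<lambda>c. D x c + D y c)"
  using D_linear by (simp add: linear_on_Alg_def)

lemma D_scale: "x \<in> Alg \<Longrightarrow> D (\<lambda>c. a * x c) = (\<lambda>c. a * D x c)"
  using D_linear by (simp add: linear_on_Alg_def)

lemma D_zero: "D (\<lambda>c. 0) = (\<lambda>c. 0)"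
  using D_scale[of "unit_vec (L 0)" 0] by simp

lemma D_lin_comb:
  "finite F \<Longrightarrow> D (\<lambda>c. \<Sum>y\<in>F. f y * unit_vec y c) = (\<lambda>c. \<Sum>y\<in>F. f y * D (unit_vec y) c)"
proof (induction F rule: finite_induct)
  case empty
  then show ?case by (simp add: D_zero)
next
  case (insert y F)
  then show ?case
    using D_add[OF scale_in_Alg[OF unit_vec_in_Alg] lin_comb_in_Alg[OF insert(1)], of "f y" y f]
    by (simp add: D_scale)
qed

lemma D_unit_vec_degree: "D (unit_vec b) c \<noteq> 0 \<Longrightarrow> idx c = idx b + k"
proof -
  assume "D (unit_vec b) c \<noteq> 0"
  moreover have "unit_vec b \<in> graded (idx b)" by (simp add: graded_def)
  then have "D (unit_vec b) \<in> graded (idx b + k)"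
    using degree by (simp add: has_degree_def)
  ultimately show ?thesis by (simp add: graded_def supp_def)
qed

lemma D_unit_vec_parity: "D (unit_vec b) c \<noteq> 0 \<Longrightarrow> is_odd_b c = is_odd_b b"
proof -
  assume "D (unit_vec b) c \<noteq> 0"
  moreover have "homog (is_odd_b b) (unit_vec b)" by (simp add: homog_def)
  then have "homog (is_odd_b b) (D (unit_vec b))"
    using superder by (simp add: superderivation_def)
  ultimately show ?thesis by (simp add: homog_def supp_def)
qed

lemma D_Leibniz_unit_vec:
  "D (bb lam a b) = (\<lambda>c. br lam (D (unit_vec a)) (unit_vec b) c + br lam (unit_vec a) (D (unit_vec b)) c)"
proof -
  have Leibniz: "\<forall>px py x y. homog px x \<longrightarrow> homog py y \<longrightarrow>
      D (br lam x y) = (\<lambda>c. br lam (D x) y c + (if False \<and> px then -1 else 1) * br lam x (D y) c)"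
    using superder unfolding superderivation_def by (elim conjE)
  have "homog (is_odd_b a) (unit_vec a)" "homog (is_odd_b b) (unit_vec b)"
    by (simp_all add: homog_def)
  from Leibniz[rule_format, OF this] show ?thesis
    by (simp add: br_unit_vecs)
qed

lemma supp_D_L0: "supp (D (unit_vec (L 0))) \<subseteq> {L k, I k}"
proof
  fix c assume "c \<in> supp (D (unit_vec (L 0)))"
  then show "c \<in> {L k, I k}"
    using D_unit_vec_degree[of "L 0" c] D_unit_vec_parity[of "L 0" c]
    by (cases c) (simp_all add: supp_def)
qed

context
  assumes k_nonzero: "k \<noteq> 0"
begin

definition inner_elem :: elem where
  "inner_elem = (\<lambda>c. D (unit_vec (L 0)) c / of_int k)"

lemma supp_inner_elem: "supp inner_elem \<subseteq> {L k, I k}"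
  using supp_D_L0 by (auto simp: inner_elem_def supp_def)

lemma inner_elem_eq:
  "inner_elem = (\<lambda>c. inner_elem (L k) * unit_vec (L k) c + inner_elem (I k) * unit_vec (I k) c)"
  by (rule ext) (use supp_inner_elem in \<open>auto simp: supp_def unit_vec_def\<close>)

lemma br_D_L0_left:
  "br lam (D (unit_vec (L 0))) (unit_vec y) c = of_int k * br lam inner_elem (unit_vec y) c"
  using supp_D_L0 supp_inner_elem k_nonzero
  by (simp add: br_unit_vec_right[of "{L k, I k}"] inner_elem_def algebra_simps)

lemma D_commutator_L0:
  "of_int k * (D (unit_vec y) c - br lam inner_elem (unit_vec y) c)
     = lam * (G_to_H (D (unit_vec y)) c - D (G_to_H (unit_vec y)) c)"
proof -
  have "D (bb lam (L 0) y) c = - of_int (idx y) * D (unit_vec y) c + lam * D (G_to_H (unit_vec y)) c"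
    unfolding bb_L0_left
    by (subst D_add) (simp_all only: scale_in_Alg unit_vec_in_Alg G_to_H_unit_vec_in_Alg D_scale)
  moreover have "br lam (unit_vec (L 0)) (D (unit_vec y)) c
      = - of_int (idx y + k) * D (unit_vec y) c + lam * G_to_H (D (unit_vec y)) c"
    using D_unit_vec_degree[of y c]
    by (cases "D (unit_vec y) c = 0") (simp_all add: br_L0_left D_in_Alg)
  ultimately show ?thesis
    using fun_cong[OF D_Leibniz_unit_vec[of "L 0" y], of c]
    by (simp add: br_D_L0_left algebra_simps)
qed

lemma D_unit_vec_from_G_to_H:
  assumes "D (G_to_H (unit_vec y)) = br lam inner_elem (G_to_H (unit_vec y))"
  shows "D (unit_vec y) = br lam inner_elem (unit_vec y)"
proof -
  let ?w = "\<lambda>c. D (unit_vec y) c - br lam inner_elem (unit_vec y) c"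
  have "of_int k * ?w c = lam * G_to_H ?w c" for c
  proof -
    have "G_to_H ?w c = G_to_H (D (unit_vec y)) c - G_to_H (br lam inner_elem (unit_vec y)) c"
      by (cases c) (simp_all add: G_to_H_def)
    also have "\<dots> = G_to_H (D (unit_vec y)) c - D (G_to_H (unit_vec y)) c"
      by (simp add: G_to_H_br_commute[OF supp_inner_elem] assms)
    finally show ?thesis
      by (simp add: D_commutator_L0)
  qed
  then have "?w = (\<lambda>c. 0)"
    by (rule G_to_H_eigenvector_zero[OF k_nonzero])
  then show ?thesis
    by (simp add: fun_eq_iff)
qed

lemma D_unit_vec: "D (unit_vec y) = br lam inner_elem (unit_vec y)"
proof -
  have non_G: "D (unit_vec b) = br lam inner_elem (unit_vec b)" if "\<forall>p. b \<noteq> G p" for b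
    by (rule D_unit_vec_from_G_to_H) (use that in \<open>cases b; simp add: G_to_H_unit_vec D_zero\<close>)
  show ?thesis
  proof (cases y)
    case (G p)
    then show ?thesis
      by (intro D_unit_vec_from_G_to_H) (simp add: G_to_H_unit_vec non_G)
  qed (simp_all add: non_G)
qed

lemma D_eq_ad: "x \<in> Alg \<Longrightarrow> D x = br lam inner_elem x"
proof (rule ext)
  fix c assume x: "x \<in> Alg"
  then have "D x c = (\<Sum>y\<in>supp x. x y * D (unit_vec y) c)"
    using D_lin_comb[of "supp x" x] Alg_unit_vec_expansion[OF x] by (simp add: Alg_def)
  also have "\<dots> = br lam inner_elem x c"
    by (simp add: D_unit_vec br_expand_right[OF x])
  finally show "D x c = br lam inner_elem x c" .
qed

end

end

theorem lemma2p2: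
  fixes lam :: complex and k :: int and D :: "elem \<Rightarrow> elem"
  assumes "k \<noteq> 0"
    and "superderivation lam False D"
    and "has_degree k D"
  shows "\<exists>a b :: complex. \<forall>x\<in>Alg.
           D x = br lam (\<lambda>c. a * unit_vec (L k) c + b * unit_vec (I k) c) x"
  using D_eq_ad[OF assms(2,3,1)] inner_elem_eq[OF assms(2,3,1)] by metis

end
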